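(* The function \[ F(x)=\frac{2\sqrt2+(1+x)^{1/2}}{(1-x)^{1/2}}\arccos x \] is strictly decreasing on $(0,1)$. Consequently, for all $x\in(0,1)$, \[ \frac{6(1-x)^{1/2}}{2\sqrt2+(1+x)^{1/2}}<\arccos x<\frac{\bigl(\frac12+\sqrt2\bigr)\pi\,(1-x)^{1/2}}{2\sqrt2+(1+x)^{1/2}}, \] and the constants $6$ and $\bigl(\frac12+\sqrt2\bigr)\pi$ are the best possible (i.e. $6$ cannot be replaced by a larger constant and $(\frac12+\sqrt2)\pi$ cannot be replaced by a smaller constant).
   Context: $\arccos$ denotes the principal inverse cosine with values in $[0,\pi]$. *)

theory Defs
  imports "HOL-Analysis.Analysis"
begin

definition F3 :: "real \<Rightarrow> real" where
  "F3 x = (2 * sqrt 2 + sqrt (1 + x)) / sqrt (1 - x) * arccos x"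

definition G3 :: "real \<Rightarrow> real" where
  "G3 x = sqrt (1 - x) / (2 * sqrt 2 + sqrt (1 + x))"

end

theory Submission
  imports Defs "HOL-Real_Asymp.Real_Asymp"
begin

(*
  Substitute x = cos (2u) with u \<in> (0, pi/4).  Then arccos x = 2u,
  sqrt (1 - x) = sqrt 2 * sin u and sqrt (1 + x) = sqrt 2 * cos u, so that
      F3 (cos (2u)) = 2 * Phi u,    where   Phi u = u (2 + cos u) / sin u.
  Since cos (2u) is decreasing in u, F3 is strictly decreasing on (0,1) iff Phi
  is strictly increasing on (0, pi/4).  The numerator of Phi' is
  2 sin u + sin u cos u - u - 2u cos u, which vanishes at 0 and has derivative
  2 sin u (u - sin u) > 0; hence Phi is strictly increasing on (0, pi/2).
  Moreover Phi u \<rightarrow> 3 as u \<rightarrow> 0+ and 2 Phi (pi/4) = (1/2 + sqrt 2) pi, so F3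
  takes values strictly between 6 and (1/2 + sqrt 2) pi and comes arbitrarily
  close to both ends.  Finally arccos x = F3 x * G3 x with G3 x > 0, which turns
  every statement about F3 into the stated bounds for arccos and their sharpness.
*)

lemma sin_less_self:
  fixes u :: real
  assumes "0 < u"
  shows "sin u < u"
proof (cases "u \<le> pi")
  case True
  have "(\<lambda>x. x - sin x) 0 < (\<lambda>x. x - sin x) u"
  proof (rule DERIV_pos_imp_increasing_open[OF assms])
    fix y assume y: "0 < y" "y < u"
    have "cos y < cos 0" using y True by (intro cos_monotone_0_pi) auto
    then show "\<exists>d. ((\<lambda>x. x - sin x) has_real_derivative d) (at y) \<and> d > 0"
      by (intro exI[of _ "1 - cos y"]) (auto intro!: derivative_eq_intros)
  qed (intro continuous_intros)
  then show ?thesis by simp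
next
  case False
  then show ?thesis using sin_le_one[of u] pi_gt3 by linarith
qed

text \<open>The function with F3 (cos (2u)) = 2 * Phi u.\<close>
definition Phi :: "real \<Rightarrow> real" where
  "Phi u = u * (2 + cos u) / sin u"

text \<open>The numerator of the derivative of Phi (the denominator being sin u squared).\<close>
definition Phi_numer :: "real \<Rightarrow> real" where
  "Phi_numer u = 2 * sin u + sin u * cos u - u - 2 * u * cos u"

text \<open>Phi_numer vanishes at 0 and has derivative 2 sin u (u - sin u), so it is
  positive on (0, pi).\<close>
lemma Phi_numer_pos:
  assumes "0 < u" "u < pi"
  shows "Phi_numer u > 0"
proof -
  have "Phi_numer 0 < Phi_numer u"
  proof (rule DERIV_pos_imp_increasing_open[OF assms(1)])
    fix y assume y: "0 < y" "y < u"
    have "sin y > 0" using y assms by (intro sin_gt_zero) auto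
    with sin_less_self[of y] y have pos: "2 * sin y * (y - sin y) > 0" by simp
    have "(Phi_numer has_real_derivative
       (2 * cos y + (cos y * cos y - sin y * sin y) - 1 - (2 * cos y - 2 * y * sin y))) (at y)"
      unfolding Phi_numer_def by (auto intro!: derivative_eq_intros)
    moreover have "2 * cos y + (cos y * cos y - sin y * sin y) - 1 - (2 * cos y - 2 * y * sin y)
        = 2 * sin y * (y - sin y)"
      using sin_cos_squared_add[of y] by (simp add: algebra_simps power2_eq_square)
    ultimately show "\<exists>d. (Phi_numer has_real_derivative d) (at y) \<and> d > 0"
      using pos by metis
  qed (unfold Phi_numer_def, intro continuous_intros)
  then show ?thesis by (simp add: Phi_numer_def)
qed

text \<open>Phi' = Phi_numer / sin^2 > 0, so Phi is strictly increasing on (0, pi).\<close>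
lemma Phi_strict_mono:
  assumes "0 < a" "a < b" "b < pi"
  shows "Phi a < Phi b"
proof (rule DERIV_pos_imp_increasing[OF assms(2)])
  fix y assume y: "a \<le> y" "y \<le> b"
  have s: "sin y > 0" using y assms by (intro sin_gt_zero) auto
  have "(Phi has_real_derivative
     (((1 * (2 + cos y) + y * (- sin y)) * sin y - y * (2 + cos y) * cos y) / (sin y * sin y))) (at y)"
    unfolding Phi_def using s by (auto intro!: derivative_eq_intros)
  moreover have "(1 * (2 + cos y) + y * (- sin y)) * sin y - y * (2 + cos y) * cos y = Phi_numer y"
  proof -
    have "y * (cos y * cos y) + y * (sin y * sin y) = y"
      using sin_cos_squared_add[of y] by (simp add: power2_eq_square distrib_left[symmetric])
    then show ?thesis unfolding Phi_numer_def by (simp add: algebra_simps)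
  qed
  moreover have "Phi_numer y > 0" using y assms by (intro Phi_numer_pos) auto
  ultimately show "\<exists>d. (Phi has_real_derivative d) (at y) \<and> d > 0"
    using s by (metis divide_pos_pos mult_pos_pos)
qed

text \<open>The limit of Phi at the left end point, giving the constant 6 = 2 * 3.\<close>
lemma Phi_tendsto_3: "(Phi \<longlongrightarrow> 3) (at_right 0)"
  unfolding Phi_def by real_asymp

lemma Phi_ge_3:
  assumes "0 < v" "v < pi"
  shows "3 \<le> Phi v"
proof (rule tendsto_upperbound[OF Phi_tendsto_3])
  show "\<forall>\<^sub>F u in at_right 0. Phi u \<le> Phi v"
    using eventually_at_right_real[OF assms(1)]
    by eventually_elim (use assms in \<open>auto intro!: less_imp_le[OF Phi_strict_mono]\<close>)
qed simp

lemma Phi_pi_quarter: "2 * Phi (pi/4) = (1/2 + sqrt 2) * pi"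
  unfolding Phi_def by (simp add: sin_45 cos_45 field_simps real_sqrt_divide)

lemma Phi_tendsto_pi_quarter: "(Phi \<longlongrightarrow> Phi (pi/4)) (at_left (pi/4))"
proof -
  have "sin (pi/4) \<noteq> 0" by (simp add: sin_45)
  then have "isCont Phi (pi/4)" unfolding Phi_def by (intro continuous_intros) auto
  then show ?thesis by (simp add: isCont_def filterlim_at_split)
qed

text \<open>The substitution x = cos (2u) maps (0, pi/4) onto (0, 1); the preimage of x
  is u = arccos x / 2.\<close>
lemma cos_double_in_unit_interval:
  assumes "0 < u" "u < pi/4"
  shows "cos (2*u) \<in> {0<..<1}"
proof -
  have "cos (2*u) > 0" using assms by (intro cos_gt_zero_pi) auto
  moreover have "cos (2*u) < cos 0" using assms by (intro cos_monotone_0_pi) auto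
  ultimately show ?thesis by simp
qed

lemma unit_interval_as_cos_double:
  assumes "x \<in> {0<..<1::real}"
  obtains u where "0 < u" "u < pi/4" "x = cos (2*u)"
proof
  have "arccos 1 < arccos x" "arccos x < arccos 0"
    using assms by (intro arccos_less_arccos; simp)+
  then have "0 < arccos x" "arccos x < pi/2" by simp_all
  then show "0 < arccos x / 2" "arccos x / 2 < pi/4" by simp_all
  show "x = cos (2 * (arccos x / 2))" using assms by simp
qed

lemma F3_cos_double:
  assumes "0 < u" "u < pi/4"
  shows "F3 (cos (2*u)) = 2 * Phi u"
proof -
  have s: "sin u > 0" using assms by (intro sin_gt_zero) auto
  have c: "cos u > 0" using assms by (intro cos_gt_zero_pi) auto
  have "arccos (cos (2*u)) = 2*u" using assms by (intro arccos_cos) auto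
  moreover have "sqrt (1 - cos (2*u)) = sqrt 2 * sin u"
    using s by (simp add: cos_double_sin real_sqrt_mult)
  moreover have "sqrt (1 + cos (2*u)) = sqrt 2 * cos u"
    using c by (simp add: cos_double_cos real_sqrt_mult)
  ultimately show ?thesis using s unfolding F3_def Phi_def by (simp add: field_simps)
qed

lemma F3_strict_antimono: "strict_antimono_on {0<..<1} F3"
proof (rule monotone_onI)
  fix x y :: real assume xy: "x \<in> {0<..<1}" "y \<in> {0<..<1}" "x < y"
  obtain u where u: "0 < u" "u < pi/4" "x = cos (2*u)"
    using unit_interval_as_cos_double[OF xy(1)] by blast
  obtain t where t: "0 < t" "t < pi/4" "y = cos (2*t)"
    using unit_interval_as_cos_double[OF xy(2)] by blast
  have "arccos y < arccos x" using xy by (intro arccos_less_arccos) auto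
  then have "t < u" using u t arccos_cos[of "2*u"] arccos_cos[of "2*t"] by simp
  then have "Phi t < Phi u" using u t by (intro Phi_strict_mono) auto
  then show "F3 y < F3 x" using u t F3_cos_double by simp
qed

lemma F3_bounds:
  assumes "x \<in> {0<..<1::real}"
  shows "6 < F3 x" "F3 x < (1/2 + sqrt 2) * pi"
proof -
  obtain u where u: "0 < u" "u < pi/4" "x = cos (2*u)"
    using unit_interval_as_cos_double[OF assms] by blast
  have "3 \<le> Phi (u/2)" "Phi (u/2) < Phi u" "Phi u < Phi (pi/4)"
    using u by (auto intro!: Phi_ge_3 Phi_strict_mono)
  then show "6 < F3 x" "F3 x < (1/2 + sqrt 2) * pi"
    using u F3_cos_double Phi_pi_quarter by simp_all
qed

lemma F3_value_from_eventually:
  assumes "F \<noteq> bot" "\<forall>\<^sub>F u in F. u \<in> {0<..<pi/4}" "\<forall>\<^sub>F u in F. P (2 * Phi u)"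
  shows "\<exists>x\<in>{0<..<1}. P (F3 x)"
proof -
  obtain u where u: "u \<in> {0<..<pi/4}" "P (2 * Phi u)"
    using eventually_happens[OF eventually_conj[OF assms(2,3)]] assms(1) by auto
  then show ?thesis
    using cos_double_in_unit_interval F3_cos_double by (intro bexI[of _ "cos (2*u)"]) auto
qed

lemma F3_approaches_6:
  assumes "6 < c"
  shows "\<exists>x\<in>{0<..<1}. F3 x < c"
proof (rule F3_value_from_eventually[where F = "at_right 0"])
  show "\<forall>\<^sub>F u in at_right 0. 2 * Phi u < c"
    using order_tendstoD(2)[OF Phi_tendsto_3, of "c/2"] assms by (simp add: mult.commute)
qed (simp, rule eventually_at_right_real, simp)

lemma F3_approaches_upper:
  assumes "c < (1/2 + sqrt 2) * pi"
  shows "\<exists>x\<in>{0<..<1}. c < F3 x"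
proof (rule F3_value_from_eventually[where F = "at_left (pi/4)"])
  show "\<forall>\<^sub>F u in at_left (pi/4). c < 2 * Phi u"
    using order_tendstoD(1)[OF Phi_tendsto_pi_quarter, of "c/2"] assms Phi_pi_quarter
    by (simp add: mult.commute)
qed (simp, rule eventually_at_left_real, simp)

lemma arccos_eq_F3_G3:
  assumes "x \<in> {0<..<1::real}"
  shows "arccos x = F3 x * G3 x" and "G3 x > 0"
proof -
  have "2 * sqrt 2 + sqrt (1 + x) > 0" using assms by (simp add: add_pos_nonneg)
  moreover have "sqrt (1 - x) > 0" using assms by simp
  ultimately show "arccos x = F3 x * G3 x" "G3 x > 0"
    unfolding F3_def G3_def by simp_all
qed

lemma below_arccos_iff:
  assumes "x \<in> {0<..<1::real}"
  shows "c * G3 x < arccos x \<longleftrightarrow> c < F3 x"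
  using arccos_eq_F3_G3[OF assms] by simp

lemma above_arccos_iff:
  assumes "x \<in> {0<..<1::real}"
  shows "arccos x < c * G3 x \<longleftrightarrow> F3 x < c"
  using arccos_eq_F3_G3[OF assms] by simp

theorem theorem3:
  shows "strict_antimono_on {0<..<1} F3
    \<and> (\<forall>x\<in>{0<..<1::real}. 6 * G3 x < arccos x \<and> arccos x < (1/2 + sqrt 2) * pi * G3 x)
    \<and> (\<forall>c::real. c > 6 \<longrightarrow> \<not> (\<forall>x\<in>{0<..<1::real}. c * G3 x < arccos x))
    \<and> (\<forall>c::real. c < (1/2 + sqrt 2) * pi \<longrightarrow> \<not> (\<forall>x\<in>{0<..<1::real}. arccos x < c * G3 x))"
proof (intro conjI allI impI ballI)
  show "strict_antimono_on {0<..<1} F3" by (rule F3_strict_antimono)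
next
  fix x :: real assume "x \<in> {0<..<1}"
  then show "6 * G3 x < arccos x" "arccos x < (1/2 + sqrt 2) * pi * G3 x"
    using F3_bounds below_arccos_iff above_arccos_iff by simp_all
next
  fix c :: real assume "c > 6"
  then obtain x where "x \<in> {0<..<1}" "F3 x < c" using F3_approaches_6 by blast
  then show "\<not> (\<forall>x\<in>{0<..<1::real}. c * G3 x < arccos x)"
    using below_arccos_iff by force
next
  fix c :: real assume "c < (1/2 + sqrt 2) * pi"
  then obtain x where "x \<in> {0<..<1}" "c < F3 x" using F3_approaches_upper by blast
  then show "\<not> (\<forall>x\<in>{0<..<1::real}. arccos x < c * G3 x)"
    using above_arccos_iff by force
qed

end
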